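(* Fix $X\in\{\mathsf B,\mathsf C,\mathsf D\}$ and $n\in\mathbb Z_{>0}$. Let $v\in W^X_n$ with $k:=\mathsf{LD}(v)>0$, let $l\ge1$, and let $j_1,\dots,j_l\in\mathbb Z$ satisfy either $j_1<j_2<\cdots<j_l<k$, or (only when $X=\mathsf B$) $j_1=0$ and $j_2<\cdots<j_l<k$, such that $t_{j_ak}\in W^X_\infty$ and $\ell^X(vt_{j_1k}t_{j_2k}\cdots t_{j_ak})=\ell^X(v)+a$ for all $a\in[l]$. Let $u=vt_{j_1k}t_{j_2k}\cdots t_{j_lk}$. Then either (a) $u\in W^X_n$ and $u\prec_{\mathsf{LD}}v$, or (b) $u\in W^X_{n+1}$ and $\mathsf{LD}(u)<\mathsf{LD}(v)$.
   Context: A signed permutation is a bijection $w$ of $\mathbb Z$ with $w(-i)=-w(i)$ and $w(i)=i$ for all but finitely many $i$; $(wt)(m)=w(t(m))$. $W^{\mathsf B}_\infty=W^{\mathsf C}_\infty$: all signed permutations; $W^{\mathsf D}_\infty$: those with $|\{i>0:w(i)<0\}|$ even; $W^X_n$: elements fixing every $m>n$. Lengths $\ell^{\mathsf B}=\ell^{\mathsf C}=(\mathrm{inv}+\ell_0)/2$, $\ell^{\mathsf D}=(\mathrm{inv}-\ell_0)/2$, with $\mathrm{inv}(w)=|\{(p,q):p<q,w(p)>w(q)\}|$ over $\mathbb Z^2$ and $\ell_0(w)=|\{p>0:w(p)<0\}|$. For $i\ne0$, $t_{ij}=(i,j)(-i,-j)$; $t_{0j}=(-j,j)$ (in $W^{\mathsf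 B}_\infty$, not in $W^{\mathsf D}_\infty$). $\mathrm{Des}(w)=\{m>0:w(m)>w(m+1)\}$, $\mathsf{LD}(w)=\max(\{0\}\cup\mathrm{Des}(w))$. The partial order $\prec_{\mathsf{LD}}$ on signed permutations: $u\prec_{\mathsf{LD}}w$ iff $\mathsf{LD}(u)<\mathsf{LD}(w)$, or $0<\mathsf{LD}(u)=\mathsf{LD}(w)$ and $u(\mathsf{LD}(u))<w(\mathsf{LD}(w))$. *)

theory Defs
  imports Main
begin

datatype ctype = TB | TC | TD

definition signed_perm :: "(int \<Rightarrow> int) \<Rightarrow> bool" where
  "signed_perm w \<longleftrightarrow> bij w \<and> (\<forall>i. w (- i) = - w i) \<and> finite {i. w i \<noteq> i}"

definition ell0 :: "(int \<Rightarrow> int) \<Rightarrow> nat" where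
  "ell0 w = card {p::int. p > 0 \<and> w p < 0}"

definition invs :: "(int \<Rightarrow> int) \<Rightarrow> nat" where
  "invs w = card {(p, q). p \<noteq> 0 \<and> q \<noteq> 0 \<and> p < q \<and> w p > w q}"

definition W_inf :: "ctype \<Rightarrow> (int \<Rightarrow> int) set" where
  "W_inf X = {w. signed_perm w \<and> (X = TD \<longrightarrow> even (ell0 w))}"

definition W_n :: "ctype \<Rightarrow> nat \<Rightarrow> (int \<Rightarrow> int) set" where
  "W_n X n = {w. w \<in> W_inf X \<and> (\<forall>m. m > int n \<longrightarrow> w m = m)}"

definition len :: "ctype \<Rightarrow> (int \<Rightarrow> int) \<Rightarrow> int" where
  "len X w = (if X = TD then (int (invs w) - int (ell0 w)) div 2
              else (int (invs w) + int (ell0 w)) div 2)"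

definition transp :: "int \<Rightarrow> int \<Rightarrow> int \<Rightarrow> int" where
  "transp a b m = (if m = a then b else if m = b then a else m)"

(* t_{ij}; product of cycles read as composition of maps *)
definition tref :: "int \<Rightarrow> int \<Rightarrow> (int \<Rightarrow> int)" where
  "tref i j = (if i = 0 then transp (- j) j else transp i j \<circ> transp (- i) (- j))"

primrec tprod :: "(int \<Rightarrow> int) \<Rightarrow> (nat \<Rightarrow> int) \<Rightarrow> int \<Rightarrow> nat \<Rightarrow> (int \<Rightarrow> int)" where
  "tprod v j k 0 = v"
| "tprod v j k (Suc a) = tprod v j k a \<circ> tref (j (Suc a)) k"

definition Des :: "(int \<Rightarrow> int) \<Rightarrow> int set" where
  "Des w = {m. m > 0 \<and> w m > w (m + 1)}"

definition LD :: "(int \<Rightarrow> int) \<Rightarrow> int" where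
  "LD w = Max ({0} \<union> Des w)"

definition prec_LD :: "(int \<Rightarrow> int) \<Rightarrow> (int \<Rightarrow> int) \<Rightarrow> bool" where
  "prec_LD u w \<longleftrightarrow> LD u < LD w \<or> (0 < LD u \<and> LD u = LD w \<and> u (LD u) < w (LD w))"

end

theory Submission
  imports Defs
begin

text \<open>
  Write \<open>u_a = v t_{j_1 k} ... t_{j_a k}\<close>. Since every factor raises the length by exactly one,
  the value at \<open>k\<close> drops at every step: otherwise \<open>u_a\<close> would have an ascent at the two
  positions exchanged by \<open>t_{j_a k}\<close>, and multiplying by \<open>t_{j_a k}\<close> again would raise the
  length once more. Hence \<open>u_l(k) < v(k)\<close>.

  Above \<open>k = LD v\<close> the permutation \<open>v\<close> is increasing, and \<open>t_{j k}\<close> with \<open>j < k\<close> moves a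
  position \<open>x > k\<close> only if \<open>x = -j\<close>. A step with \<open>j_a < -k\<close> occurs at most once, because it
  leaves \<open>u_a(k) = -v(-j_a)\<close> while the values at \<open>k\<close> decrease and \<open>v\<close> increases. At
  \<open>i = -j_a\<close> the permutation \<open>u_l\<close> takes the value \<open>-u_{a-1}(k)\<close>, which still lies between
  \<open>v(i - 1)\<close> and \<open>v(i)\<close>; the lower bound holds because otherwise \<open>t_{j_a k}\<close> would raise the
  length by two. This forces \<open>i \<le> n + 1\<close>, so \<open>u_l\<close> is increasing above \<open>k\<close> and fixes every
  \<open>m > n + 1\<close>; if \<open>i = n + 1\<close>, then \<open>u_l(k) \<le> -(n + 1) < u_l(k + 1)\<close> and \<open>k\<close> is no longer
  a descent.

  The length estimates compare the inversions of \<open>w\<close> and \<open>w s\<close>, for a signed transposition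
  \<open>s\<close>, pair by pair over a finite window containing both supports.
\<close>

section \<open>Signed permutations and inversion counts\<close>

lemma signed_perm_inj: "signed_perm w \<Longrightarrow> inj w"
  by (simp add: signed_perm_def bij_is_inj)

lemma signed_perm_odd: "signed_perm w \<Longrightarrow> w (- x) = - w x"
  by (simp add: signed_perm_def)

lemma signed_perm_0: "signed_perm w \<Longrightarrow> w 0 = 0"
  using signed_perm_odd[of w 0] by simp

lemma signed_perm_bounded_support:
  assumes "signed_perm w"
  obtains N where "0 \<le> N" "\<And>x. N < \<bar>x\<bar> \<Longrightarrow> w x = x"
proof
  have fin: "finite {i. w i \<noteq> i}" using assms by (simp add: signed_perm_def)
  let ?N = "Max (insert 0 (abs ` {i. w i \<noteq> i}))"
  show "0 \<le> ?N" using fin by simp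
  show "w x = x" if "?N < \<bar>x\<bar>" for x
    using that fin Max_ge[of "insert 0 (abs ` {i. w i \<noteq> i})" "\<bar>x\<bar>"] by fastforce
qed

lemma signed_perm_comp:
  assumes "signed_perm w" "signed_perm t"
  shows "signed_perm (w \<circ> t)"
proof -
  have "{i. (w \<circ> t) i \<noteq> i} \<subseteq> {i. w i \<noteq> i} \<union> {i. t i \<noteq> i}" by auto
  then show ?thesis
    using assms finite_subset by (fastforce simp: signed_perm_def bij_comp)
qed

lemma abs_le_if_fixed_outside:
  fixes w :: "int \<Rightarrow> int"
  assumes "inj w" "\<And>x. N < \<bar>x\<bar> \<Longrightarrow> w x = x" "\<bar>x\<bar> \<le> N"
  shows "\<bar>w x\<bar> \<le> N"
proof (rule ccontr)
  assume "\<not> \<bar>w x\<bar> \<le> N"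
  then have "w (w x) = w x" by (intro assms(2)) simp
  then have "w x = x" using assms(1) by (simp add: inj_eq)
  then show False using \<open>\<not> \<bar>w x\<bar> \<le> N\<close> assms(3) by simp
qed

definition window :: "int \<Rightarrow> int set" where
  "window N = {-N..N} - {0}"

lemma finite_window [simp]: "finite (window N)"
  by (simp add: window_def)

lemma invs_eq_window_sum:
  assumes "inj w" "\<And>x. N < \<bar>x\<bar> \<Longrightarrow> w x = x"
  shows "int (invs w) = (\<Sum>x\<in>window N. \<Sum>y\<in>window N. of_bool (x < y \<and> w y < w x))"
proof -
  have fixed: "w x = x" if "\<not> \<bar>x\<bar> \<le> N" for x
    using assms(2) that by simp
  have image_bounded: "\<bar>w z\<bar> \<le> N" if "\<bar>z\<bar> \<le> N" for z
    by (rule abs_le_if_fixed_outside[OF assms(1)]) (use assms(2) that in auto)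
  have bounded: "\<bar>x\<bar> \<le> N \<and> \<bar>y\<bar> \<le> N" if "x < y" "w y < w x" for x y
  proof (cases "\<bar>x\<bar> \<le> N")
    case True
    then show ?thesis
      using that fixed[of y] image_bounded[OF True] by (auto simp: abs_le_iff)
  next
    case False
    then have "w x = x" by (rule fixed)
    have "\<bar>y\<bar> \<le> N"
    proof (rule ccontr)
      assume "\<not> \<bar>y\<bar> \<le> N"
      then have "w y = y" by (rule fixed)
      then show False using that \<open>w x = x\<close> by simp
    qed
    then show ?thesis
      using that False \<open>w x = x\<close> image_bounded[of y] by arith
  qed
  then have "{(x, y). x \<noteq> 0 \<and> y \<noteq> 0 \<and> x < y \<and> w x > w y}
      = (window N \<times> window N) \<inter> {(x, y). x < y \<and> w y < w x}"
    using bounded by (fastforce simp: window_def abs_le_iff)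
  then have "int (invs w) = (\<Sum>(x, y)\<in>window N \<times> window N. of_bool (x < y \<and> w y < w x))"
    by (simp add: invs_def case_prod_unfold)
  then show ?thesis
    by (simp only: sum.cartesian_product)
qed

lemma ell0_eq_window_sum:
  assumes "\<And>x. N < \<bar>x\<bar> \<Longrightarrow> w x = x"
  shows "int (ell0 w) = (\<Sum>x\<in>window N. of_bool (0 < x \<and> w x < 0))"
proof -
  have "x \<le> N" if "0 < x" "w x < 0" for x
    using that assms[of x] by fastforce
  then have "{x. x > 0 \<and> w x < 0} = window N \<inter> {x. 0 < x \<and> w x < 0}"
    by (force simp: window_def)
  then show ?thesis by (simp add: ell0_def)
qed

definition signed_transp :: "(int \<Rightarrow> int) \<Rightarrow> int \<Rightarrow> int \<Rightarrow> bool" where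
  "signed_transp s p q \<longleftrightarrow> s p = q \<and> s q = p \<and> s (-p) = -q \<and> s (-q) = -p
     \<and> (\<forall>x. x \<notin> {p, q, -p, -q} \<longrightarrow> s x = x)"

lemma signed_transp_fixed: "signed_transp s p q \<Longrightarrow> x \<notin> {p, q, -p, -q} \<Longrightarrow> s x = x"
  by (simp add: signed_transp_def)

lemma signed_transp_values:
  "signed_transp s p q \<Longrightarrow> s p = q \<and> s q = p \<and> s (-p) = -q \<and> s (-q) = -p"
  by (simp add: signed_transp_def)

lemma signed_transp_involution:
  assumes "signed_transp s p q"
  shows "s (s x) = x"
  using signed_transp_values[OF assms] signed_transp_fixed[OF assms, of x]
  by (cases "x \<in> {p, q, -p, -q}") auto

lemma signed_transp_signed_perm:
  assumes "signed_transp s p q"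
  shows "signed_perm s"
proof -
  have "bij s"
    using signed_transp_involution[OF assms] by (intro o_bij[of s]) auto
  moreover have "s (- x) = - s x" for x
    using signed_transp_values[OF assms] signed_transp_fixed[OF assms, of x]
      signed_transp_fixed[OF assms, of "-x"]
    by (cases "x \<in> {p, q, -p, -q}") auto
  moreover have "{x. s x \<noteq> x} \<subseteq> {p, q, -p, -q}"
    using signed_transp_fixed[OF assms] by blast
  then have "finite {x. s x \<noteq> x}"
    by (rule finite_subset) simp
  ultimately show ?thesis by (simp add: signed_perm_def)
qed

text \<open>
  Indexing the inversions of \<open>w \<circ> s\<close> by their images under \<open>s\<close>, the pair \<open>{x, y}\<close>
  contributes \<open>inv_change w s x y\<close> to \<open>2 (invs (w \<circ> s) - invs w)\<close>.
\<close>

definition inv_change :: "(int \<Rightarrow> int) \<Rightarrow> (int \<Rightarrow> int) \<Rightarrow> int \<Rightarrow> int \<Rightarrow> int" where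
  "inv_change w s x y =
     of_bool (w y < w x) * (of_bool (s x < s y) - of_bool (x < y))
   + of_bool (w x < w y) * (of_bool (s y < s x) - of_bool (y < x))"

lemma inv_change_commute: "inv_change w s x y = inv_change w s y x"
  by (simp add: inv_change_def)

lemma inv_change_fixed: "s x = x \<Longrightarrow> s y = y \<Longrightarrow> inv_change w s x y = 0"
  by (simp add: inv_change_def)

lemma twice_invs_comp_diff:
  assumes "inj w" "\<And>x. N < \<bar>x\<bar> \<Longrightarrow> w x = x"
    and "\<And>x. s (s x) = x" "s 0 = 0" "\<And>x. N < \<bar>x\<bar> \<Longrightarrow> s x = x"
  shows "2 * (int (invs (w \<circ> s)) - int (invs w))
       = (\<Sum>x\<in>window N. \<Sum>y\<in>window N. inv_change w s x y)"
proof -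
  have "inj s" by (metis assms(3) injI)
  have "s x \<in> window N" if "x \<in> window N" for x
  proof -
    have "\<bar>s x\<bar> \<le> N"
      by (rule abs_le_if_fixed_outside[OF \<open>inj s\<close>]) (use assms(5) that in \<open>auto simp: window_def\<close>)
    moreover have "s x \<noteq> 0"
      using that assms(3,4) by (metis Diff_iff singletonI window_def)
    ultimately show ?thesis by (simp add: window_def abs_le_iff)
  qed
  then have bij: "bij_betw s (window N) (window N)"
    using assms(3) by (intro bij_betw_byWitness[where f' = s]) auto
  define F :: "int \<Rightarrow> int \<Rightarrow> int"
    where "F x y = of_bool (w y < w x) * (of_bool (s x < s y) - of_bool (x < y))" for x y
  have reindex: "(\<Sum>x\<in>window N. \<Sum>y\<in>window N. g (s x) (s y))
      = (\<Sum>x\<in>window N. \<Sum>y\<in>window N. g x y)" for g :: "int \<Rightarrow> int \<Rightarrow> int"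
    using sum.reindex_bij_betw[OF bij, of "\<lambda>x. \<Sum>y\<in>window N. g x y"]
    by (simp add: sum.reindex_bij_betw[OF bij])
  have "int (invs (w \<circ> s))
      = (\<Sum>x\<in>window N. \<Sum>y\<in>window N. of_bool (x < y \<and> (w \<circ> s) y < (w \<circ> s) x))"
    by (intro invs_eq_window_sum) (simp_all add: assms(1,2,5) inj_compose \<open>inj s\<close>)
  also have "\<dots> = (\<Sum>x\<in>window N. \<Sum>y\<in>window N. of_bool (x < y \<and> w (s y) < w (s x)))"
    by (simp only: o_apply)
  also have "\<dots> = (\<Sum>x\<in>window N. \<Sum>y\<in>window N. of_bool (s x < s y \<and> w y < w x))"
    using reindex[of "\<lambda>x y. of_bool (x < y \<and> w (s y) < w (s x))"] by (simp only: assms(3))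
  finally have invs_comp: "int (invs (w \<circ> s))
      = (\<Sum>x\<in>window N. \<Sum>y\<in>window N. of_bool (s x < s y \<and> w y < w x))" .
  have invs_w: "int (invs w) = (\<Sum>x\<in>window N. \<Sum>y\<in>window N. of_bool (x < y \<and> w y < w x))"
    by (intro invs_eq_window_sum assms)
  have "int (invs (w \<circ> s)) - int (invs w) = (\<Sum>x\<in>window N. \<Sum>y\<in>window N. F x y)"
    unfolding invs_comp invs_w F_def sum_subtractf[symmetric] by (intro sum.cong refl) simp
  moreover have "(\<Sum>x\<in>window N. \<Sum>y\<in>window N. F y x) = (\<Sum>x\<in>window N. \<Sum>y\<in>window N. F x y)"
    by (rule sum.swap)
  ultimately show ?thesis
    by (simp add: inv_change_def F_def sum.distrib)
qed

lemma signed_transp_common_window: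
  assumes "signed_perm w" "signed_transp s p q" "p \<noteq> 0" "q \<noteq> 0"
  obtains N where "{p, q, -p, -q} \<subseteq> window N"
    and "\<And>x. N < \<bar>x\<bar> \<Longrightarrow> w x = x" and "\<And>x. N < \<bar>x\<bar> \<Longrightarrow> s x = x"
proof -
  obtain N0 where N0: "0 \<le> N0" "\<And>x. N0 < \<bar>x\<bar> \<Longrightarrow> w x = x"
    using signed_perm_bounded_support[OF assms(1)] by blast
  let ?N = "N0 + \<bar>p\<bar> + \<bar>q\<bar>"
  show thesis
  proof
    show "{p, q, -p, -q} \<subseteq> window ?N" using N0(1) assms(3,4) by (auto simp: window_def)
    show "w x = x" if "?N < \<bar>x\<bar>" for x using that N0 by simp
    show "s x = x" if "?N < \<bar>x\<bar>" for x
      using that N0(1) by (intro signed_transp_fixed[OF assms(2)]) auto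
  qed
qed

lemma ell0_comp_diff:
  assumes "signed_perm w" "signed_transp s p q" "p \<noteq> 0" "q \<noteq> 0"
  shows "int (ell0 (w \<circ> s)) - int (ell0 w)
       = (\<Sum>x\<in>{p, q, -p, -q}. of_bool (0 < x \<and> w (s x) < 0) - of_bool (0 < x \<and> w x < 0))"
proof -
  obtain N where N: "{p, q, -p, -q} \<subseteq> window N"
    "\<And>x. N < \<bar>x\<bar> \<Longrightarrow> w x = x" "\<And>x. N < \<bar>x\<bar> \<Longrightarrow> s x = x"
    using signed_transp_common_window[OF assms] by blast
  have "int (ell0 (w \<circ> s)) - int (ell0 w)
      = (\<Sum>x\<in>window N. of_bool (0 < x \<and> w (s x) < 0) - of_bool (0 < x \<and> w x < 0))"
    using ell0_eq_window_sum[of N "w \<circ> s"] ell0_eq_window_sum[of N w] N(2,3)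
    by (simp add: sum_subtractf)
  also have "\<dots> = (\<Sum>x\<in>{p, q, -p, -q}. of_bool (0 < x \<and> w (s x) < 0) - of_bool (0 < x \<and> w x < 0))"
    using signed_transp_fixed[OF assms(2)] by (intro sum.mono_neutral_right N(1)) auto
  finally show ?thesis .
qed

lemma even_ell0_comp_transp:
  assumes "signed_perm w" "signed_transp s p q" "p \<noteq> 0" "q \<noteq> 0" "p \<noteq> q" "p \<noteq> -q"
  shows "even (ell0 (w \<circ> s)) \<longleftrightarrow> even (ell0 w)"
proof -
  have "w p \<noteq> 0" "w q \<noteq> 0"
    using assms(3,4) signed_perm_inj[OF assms(1)] signed_perm_0[OF assms(1)] by (metis inj_eq)+
  moreover have "(\<Sum>x\<in>{p, q, -p, -q}. f x) = f p + f q + f (-p) + f (-q)" for f :: "int \<Rightarrow> int"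
    using assms(3-6) by (simp add: add.assoc)
  ultimately have "even (int (ell0 (w \<circ> s)) - int (ell0 w))"
    unfolding ell0_comp_diff[OF assms(1-4)]
    using signed_transp_values[OF assms(2)] signed_perm_odd[OF assms(1)] assms(3-6)
    by (cases "p < 0"; cases "q < 0"; cases "w p < 0"; cases "w q < 0") simp_all
  then show ?thesis by simp
qed

section \<open>Length change under a signed transposition\<close>

lemma sum_sum_split_symmetric:
  fixes g :: "'a \<Rightarrow> 'a \<Rightarrow> 'b::comm_semiring_1"
  assumes "finite S" "M \<subseteq> S" "\<And>x y. g x y = g y x"
    and "\<And>x y. x \<in> S - M \<Longrightarrow> y \<in> S - M \<Longrightarrow> g x y = 0"
  shows "(\<Sum>x\<in>S. \<Sum>y\<in>S. g x y) = (\<Sum>x\<in>M. \<Sum>y\<in>M. g x y) + 2 * (\<Sum>y\<in>S - M. \<Sum>x\<in>M. g x y)"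
proof -
  have split: "sum f S = sum f (S - M) + sum f M" for f :: "'a \<Rightarrow> 'b"
    using sum.subset_diff[OF assms(2,1)] .
  have "(\<Sum>x\<in>S. \<Sum>y\<in>S. g x y)
      = (\<Sum>x\<in>S - M. \<Sum>y\<in>M. g x y) + (\<Sum>x\<in>M. \<Sum>y\<in>S - M. g x y) + (\<Sum>x\<in>M. \<Sum>y\<in>M. g x y)"
    using assms(4) by (simp add: split sum.distrib add_ac)
  also have "(\<Sum>x\<in>S - M. \<Sum>y\<in>M. g x y) = (\<Sum>y\<in>S - M. \<Sum>x\<in>M. g x y)"
    using assms(3) by simp
  also have "(\<Sum>x\<in>M. \<Sum>y\<in>S - M. g x y) = (\<Sum>y\<in>S - M. \<Sum>x\<in>M. g x y)"
    by (rule sum.swap)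
  finally show ?thesis by (simp add: mult_2 algebra_simps)
qed

lemma inv_change_pair_bounds:
  assumes "s a = b" "s b = a" "s y = y" "a < b" "w a < w b"
    and "w y \<noteq> w a" "w y \<noteq> w b" "y \<noteq> a" "y \<noteq> b"
  shows "0 \<le> inv_change w s a y + inv_change w s b y"
    and "a < y \<Longrightarrow> y < b \<Longrightarrow> w a < w y \<Longrightarrow> w y < w b \<Longrightarrow>
      2 \<le> inv_change w s a y + inv_change w s b y"
  using assms by (auto simp: inv_change_def)

locale signed_transp_ascent =
  fixes w s :: "int \<Rightarrow> int" and p q :: int
  assumes signed_perm: "signed_perm w"
    and transp: "signed_transp s p q"
    and p_less_q: "p < q" and p_nonzero: "p \<noteq> 0" and q_nonzero: "q \<noteq> 0"
    and ascent: "w p < w q"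
begin

abbreviation moved :: "int set" where
  "moved \<equiv> {p, q, -p, -q}"

lemma w_distinct: "x \<noteq> y \<Longrightarrow> w x \<noteq> w y"
  using signed_perm_inj[OF signed_perm] by (simp add: inj_eq)

lemma twice_invs_comp_diff_split:
  obtains N where "moved \<subseteq> window N"
    and "2 * (int (invs (w \<circ> s)) - int (invs w))
       = (\<Sum>x\<in>moved. \<Sum>y\<in>moved. inv_change w s x y)
         + 2 * (\<Sum>y\<in>window N - moved. \<Sum>x\<in>moved. inv_change w s x y)"
proof -
  obtain N where N: "moved \<subseteq> window N"
    "\<And>x. N < \<bar>x\<bar> \<Longrightarrow> w x = x" "\<And>x. N < \<bar>x\<bar> \<Longrightarrow> s x = x"
    using signed_transp_common_window[OF signed_perm transp p_nonzero q_nonzero] by blast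
  have "2 * (int (invs (w \<circ> s)) - int (invs w))
      = (\<Sum>x\<in>window N. \<Sum>y\<in>window N. inv_change w s x y)"
    by (rule twice_invs_comp_diff)
      (simp_all add: N(2,3) signed_perm_inj[OF signed_perm] signed_transp_involution[OF transp]
        signed_perm_0[OF signed_transp_signed_perm[OF transp]])
  also have "\<dots> = (\<Sum>x\<in>moved. \<Sum>y\<in>moved. inv_change w s x y)
         + 2 * (\<Sum>y\<in>window N - moved. \<Sum>x\<in>moved. inv_change w s x y)"
    using signed_transp_fixed[OF transp]
    by (intro sum_sum_split_symmetric N(1) inv_change_commute inv_change_fixed) auto
  finally show thesis using N(1) that by blast
qed

lemma cross_term_bounds:
  assumes "y \<notin> moved"
  shows "0 \<le> (\<Sum>x\<in>moved. inv_change w s x y)"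
    and "p < y \<Longrightarrow> y < q \<Longrightarrow> w p < w y \<Longrightarrow> w y < w q \<Longrightarrow>
      2 \<le> (\<Sum>x\<in>moved. inv_change w s x y)"
proof -
  have s_values: "s p = q" "s q = p" "s (-p) = -q" "s (-q) = -p" "s y = y"
    using signed_transp_values[OF transp] signed_transp_fixed[OF transp assms] by auto
  note w_odd = signed_perm_odd[OF signed_perm]
  have pair: "0 \<le> inv_change w s p y + inv_change w s q y"
    "p < y \<Longrightarrow> y < q \<Longrightarrow> w p < w y \<Longrightarrow> w y < w q \<Longrightarrow>
      2 \<le> inv_change w s p y + inv_change w s q y"
    using assms s_values p_less_q ascent w_distinct
    by (intro inv_change_pair_bounds; auto)+
  have "w y \<noteq> - w p" "w y \<noteq> - w q"
    using assms w_distinct[of y "-p"] w_distinct[of y "-q"] w_odd[of p] w_odd[of q] by auto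
  then have neg_pair: "0 \<le> inv_change w s (-q) y + inv_change w s (-p) y"
    using assms s_values p_less_q ascent w_distinct w_odd[of p] w_odd[of q]
    by (intro inv_change_pair_bounds) auto
  have "(\<Sum>x\<in>moved. inv_change w s x y) = inv_change w s p y + inv_change w s q y"
    if "p = -q"
    using that p_less_q by (simp add: insert_commute)
  moreover have "(\<Sum>x\<in>moved. inv_change w s x y)
      = (inv_change w s p y + inv_change w s q y) + (inv_change w s (-q) y + inv_change w s (-p) y)"
    if "p \<noteq> -q"
    using that p_less_q p_nonzero q_nonzero by (simp add: algebra_simps)
  ultimately show "0 \<le> (\<Sum>x\<in>moved. inv_change w s x y)"
    and "p < y \<Longrightarrow> y < q \<Longrightarrow> w p < w y \<Longrightarrow> w y < w q \<Longrightarrow>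
      2 \<le> (\<Sum>x\<in>moved. inv_change w s x y)"
    using pair neg_pair by (cases "p = -q"; force)+
qed

lemma ell0_comp_diff_moved:
  "int (ell0 (w \<circ> s)) - int (ell0 w)
     = (\<Sum>x\<in>moved. of_bool (0 < x \<and> w (s x) < 0) - of_bool (0 < x \<and> w x < 0))"
  by (rule ell0_comp_diff[OF signed_perm transp p_nonzero q_nonzero])

lemma w_p_nonzero: "w p \<noteq> 0" and w_q_nonzero: "w q \<noteq> 0"
  using w_distinct[of p 0] w_distinct[of q 0] signed_perm_0[OF signed_perm] p_nonzero q_nonzero
  by auto

lemma moved_block_antipodal:
  assumes "p = -q"
  shows "4 \<le> (\<Sum>x\<in>moved. \<Sum>y\<in>moved. inv_change w s x y)
      + 2 * (int (ell0 (w \<circ> s)) - int (ell0 w))"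
proof -
  have "moved = {p, q}" using assms by auto
  then show ?thesis
    unfolding ell0_comp_diff_moved
    using assms p_less_q signed_transp_values[OF transp] ascent signed_perm_odd[OF signed_perm, of q]
    by (simp add: inv_change_def)
qed

lemma moved_block_bounds:
  assumes "p \<noteq> -q"
  defines "block \<equiv> \<Sum>x\<in>moved. \<Sum>y\<in>moved. inv_change w s x y"
    and "ell0_diff \<equiv> int (ell0 (w \<circ> s)) - int (ell0 w)"
  shows "4 \<le> block + 2 * ell0_diff" and "4 \<le> block - 2 * ell0_diff"
proof -
  note s_values = signed_transp_values[OF transp]
  note w_odd = signed_perm_odd[OF signed_perm]
  have sum_moved: "(\<Sum>x\<in>moved. f x) = f p + f q + f (-p) + f (-q)" for f :: "int \<Rightarrow> int"
    using assms(1) p_less_q p_nonzero q_nonzero by (simp add: add.assoc)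
  have "w p \<noteq> - w q"
    using w_distinct[of p "-q"] w_odd[of q] assms(1) by auto
  define dl :: int where "dl = of_bool (q < 0) - of_bool (p < 0)"
  define sP :: int where "sP = of_bool (0 < w p) - of_bool (w p < 0)"
  define sQ :: int where "sQ = of_bool (0 < w q) - of_bool (w q < 0)"
  have "inv_change w s p q = 1" "inv_change w s q p = 1"
    "inv_change w s (-p) (-q) = 1" "inv_change w s (-q) (-p) = 1"
    "inv_change w s p (-q) = 0" "inv_change w s (-q) p = 0"
    "inv_change w s q (-p) = 0" "inv_change w s (-p) q = 0"
    "inv_change w s p (-p) = dl * sP" "inv_change w s (-p) p = dl * sP"
    "inv_change w s q (-q) = - dl * sQ" "inv_change w s (-q) q = - dl * sQ"
    using s_values w_odd[of p] w_odd[of q] p_less_q p_nonzero q_nonzero ascent assms(1)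
      w_p_nonzero w_q_nonzero \<open>w p \<noteq> - w q\<close>
    by (auto simp: inv_change_def dl_def sP_def sQ_def)
  then have "block = 2 * (2 + dl * sP - dl * sQ)"
    unfolding block_def sum_moved by (simp add: inv_change_def)
  moreover have "ell0_diff =
      of_bool (0 < p \<and> w q < 0) - of_bool (0 < p \<and> w p < 0)
    + of_bool (0 < q \<and> w p < 0) - of_bool (0 < q \<and> w q < 0)
    + of_bool (p < 0 \<and> 0 < w q) - of_bool (p < 0 \<and> 0 < w p)
    + of_bool (q < 0 \<and> 0 < w p) - of_bool (q < 0 \<and> 0 < w q)"
    unfolding ell0_diff_def ell0_comp_diff_moved sum_moved using s_values w_odd[of p] w_odd[of q]
    by simp
  moreover have "(0 < p \<and> 0 < q) \<or> (p < 0 \<and> 0 < q) \<or> (p < 0 \<and> q < 0)"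
    using p_less_q p_nonzero q_nonzero by linarith
  moreover have "(0 < w p \<and> 0 < w q) \<or> (w p < 0 \<and> 0 < w q) \<or> (w p < 0 \<and> w q < 0)"
    using ascent w_p_nonzero w_q_nonzero by linarith
  ultimately show "4 \<le> block + 2 * ell0_diff" and "4 \<le> block - 2 * ell0_diff"
    unfolding dl_def sP_def sQ_def using \<open>w p \<noteq> - w q\<close> ascent
    by (auto simp: not_less_iff_gr_or_eq)
qed

lemma len_comp_ge:
  assumes "X = TD \<Longrightarrow> p \<noteq> -q"
    and "\<And>N. moved \<subseteq> window N \<Longrightarrow>
      2 * c \<le> (\<Sum>y\<in>window N - moved. \<Sum>x\<in>moved. inv_change w s x y)"
  shows "len X w + 1 + c \<le> len X (w \<circ> s)"
proof -
  define invs_diff where "invs_diff = int (invs (w \<circ> s)) - int (invs w)"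
  define ell0_diff where "ell0_diff = int (ell0 (w \<circ> s)) - int (ell0 w)"
  obtain N where "moved \<subseteq> window N"
    and split: "2 * invs_diff = (\<Sum>x\<in>moved. \<Sum>y\<in>moved. inv_change w s x y)
        + 2 * (\<Sum>y\<in>window N - moved. \<Sum>x\<in>moved. inv_change w s x y)"
    unfolding invs_diff_def by (rule twice_invs_comp_diff_split)
  have "2 * c \<le> (\<Sum>y\<in>window N - moved. \<Sum>x\<in>moved. inv_change w s x y)"
    using assms(2) \<open>moved \<subseteq> window N\<close> by blast
  then have gain: "2 + 2 * c \<le> (if X = TD then invs_diff - ell0_diff else invs_diff + ell0_diff)"
    using split moved_block_antipodal moved_block_bounds assms(1) unfolding ell0_diff_def
    by (cases "p = -q") auto
  have div_mono: "a div 2 + 1 + c \<le> b div 2" if "a + 2 + 2 * c \<le> b" for a b :: int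
  proof -
    have "(a + 2 * (1 + c)) div 2 \<le> b div 2" using that by (intro zdiv_mono1) auto
    then show ?thesis by simp
  qed
  show ?thesis
    using gain unfolding len_def invs_diff_def ell0_diff_def
    by (cases "X = TD") (auto intro: div_mono)
qed

lemma len_comp_ge_Suc:
  assumes "X = TD \<Longrightarrow> p \<noteq> -q"
  shows "len X w + 1 \<le> len X (w \<circ> s)"
proof -
  have "0 \<le> (\<Sum>y\<in>window N - moved. \<Sum>x\<in>moved. inv_change w s x y)" for N
    by (rule sum_nonneg, rule cross_term_bounds(1)) blast
  then show ?thesis
    using len_comp_ge[of X 0] assms by simp
qed

lemma len_comp_ge_Suc_Suc:
  assumes "X = TD \<Longrightarrow> p \<noteq> -q"
    and "m \<notin> moved" "m \<noteq> 0" "p < m" "m < q" "w p < w m" "w m < w q"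
  shows "len X w + 2 \<le> len X (w \<circ> s)"
proof -
  have "2 \<le> (\<Sum>y\<in>window N - moved. \<Sum>x\<in>moved. inv_change w s x y)"
    if "moved \<subseteq> window N" for N
  proof -
    have "m \<in> window N - moved"
      using that assms(2-5) by (auto simp: window_def)
    then have "(\<Sum>x\<in>moved. inv_change w s x m)
        \<le> (\<Sum>y\<in>window N - moved. \<Sum>x\<in>moved. inv_change w s x y)"
      using cross_term_bounds(1) by (intro member_le_sum) auto
    then show ?thesis
      using cross_term_bounds(2)[OF assms(2,4-7)] by linarith
  qed
  then show ?thesis
    using len_comp_ge[of X 1] assms(1) by simp
qed

end

section \<open>The reflections \<open>t_{j k}\<close>\<close>

lemma tref_neg_self: "tref (-k) k = id"
  by (rule ext) (simp add: tref_def transp_def)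

lemma tref_fixed: "x \<notin> {j, -j, k, -k} \<Longrightarrow> tref j k x = x"
  by (auto simp: tref_def transp_def)

lemma signed_transp_tref:
  assumes "k \<noteq> 0" "j \<noteq> -k"
  shows "signed_transp (tref j k) (if j = 0 then -k else j) k"
  using assms by (auto simp: signed_transp_def tref_def transp_def)

lemma ell0_tref_0: "0 < k \<Longrightarrow> ell0 (tref 0 k) = 1"
proof -
  assume "0 < k"
  then have "{x. x > 0 \<and> tref 0 k x < 0} = {k}"
    by (auto simp: tref_def transp_def)
  then show ?thesis by (simp add: ell0_def)
qed

lemma len_comp_tref_eq_Suc:
  assumes w: "signed_perm w" and "0 < k" "j < k" "X = TD \<Longrightarrow> j \<noteq> 0"
    and len_Suc: "len X (w \<circ> tref j k) = len X w + 1"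
  shows "j \<noteq> -k" and "(w \<circ> tref j k) k < w k"
proof -
  show "j \<noteq> -k"
    using len_Suc by (auto simp: tref_neg_self)
  define p where "p = (if j = 0 then -k else j)"
  have t: "signed_transp (tref j k) p k"
    unfolding p_def using signed_transp_tref \<open>0 < k\<close> \<open>j \<noteq> -k\<close> by auto
  have p: "p < k" "p \<noteq> 0" "X = TD \<Longrightarrow> p \<noteq> -k"
    using assms(2-4) \<open>j \<noteq> -k\<close> by (auto simp: p_def)
  have t_k: "tref j k k = p"
    using signed_transp_values[OF t] by simp
  show "(w \<circ> tref j k) k < w k"
  proof (rule ccontr)
    assume "\<not> (w \<circ> tref j k) k < w k"
    moreover have "w p \<noteq> w k"
      using p(1) signed_perm_inj[OF w] by (auto simp: inj_eq)
    ultimately have "(w \<circ> tref j k) p < (w \<circ> tref j k) k"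
      using signed_transp_values[OF t] t_k by auto
    \<comment> \<open>so \<open>tref j k\<close> would raise the length of \<open>w \<circ> tref j k\<close> once more\<close>
    then interpret signed_transp_ascent "w \<circ> tref j k" "tref j k" p k
      using w t p(1,2) \<open>0 < k\<close>
      by unfold_locales (auto intro: signed_perm_comp signed_transp_signed_perm)
    have "len X (w \<circ> tref j k) + 1 \<le> len X (w \<circ> tref j k \<circ> tref j k)"
      using p(3) by (rule len_comp_ge_Suc)
    also have "w \<circ> tref j k \<circ> tref j k = w"
      using signed_transp_involution[OF t] by (simp add: fun_eq_iff)
    finally show False using len_Suc by linarith
  qed
qed

lemma tprod_untouched:
  assumes "a \<le> b" "\<And>c. a < c \<Longrightarrow> c \<le> b \<Longrightarrow> x \<notin> {j c, - j c, k, -k}"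
  shows "tprod v j k b x = tprod v j k a x"
  using assms(1)
proof (induction b rule: dec_induct)
  case (step m)
  then have "tref (j (Suc m)) k x = x" using assms(2)[of "Suc m"] by (intro tref_fixed) auto
  then show ?case using step by simp
qed simp

section \<open>Descents\<close>

lemma Des_subset:
  assumes "\<forall>x>N. u x = x"
  shows "Des u \<subseteq> {1..N}"
proof
  fix m assume "m \<in> Des u"
  then have "0 < m" "u (m + 1) < u m" by (auto simp: Des_def)
  moreover have "m \<le> N"
  proof (rule ccontr)
    assume "\<not> m \<le> N"
    then have "u m = m" "u (m + 1) = m + 1" using assms by auto
    then show False using \<open>u (m + 1) < u m\<close> by simp
  qed
  ultimately show "m \<in> {1..N}" by simp
qed

lemma finite_Des: "\<forall>x>N. u x = x \<Longrightarrow> finite (Des u)"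
  by (rule finite_subset[OF Des_subset]) simp_all

lemma le_LD:
  assumes "\<forall>x>N. u x = x" "m \<in> Des u"
  shows "m \<le> LD u"
  unfolding LD_def using finite_Des[OF assms(1)] assms(2) by (intro Max_ge) auto

lemma LD_nonneg:
  assumes "\<forall>x>N. u x = x"
  shows "0 \<le> LD u"
  unfolding LD_def using finite_Des[OF assms(1)] by (intro Max_ge) auto

lemma LD_in_Des:
  assumes "\<forall>x>N. u x = x" "0 < LD u"
  shows "LD u \<in> Des u"
  using Max_in[of "{0} \<union> Des u"] finite_Des[OF assms(1)] assms(2) unfolding LD_def by auto

lemma LD_le:
  assumes "\<forall>x>N. u x = x" "0 \<le> k" "\<And>x. k < x \<Longrightarrow> u x < u (x + 1)"
  shows "LD u \<le> k"
proof -
  have "m \<le> k" if "m \<in> Des u" for m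
  proof (rule ccontr)
    assume "\<not> m \<le> k"
    then have "u m < u (m + 1)" by (intro assms(3)) simp
    with that show False by (simp add: Des_def)
  qed
  then show ?thesis
    unfolding LD_def using assms(2) finite_Des[OF assms(1)] by simp
qed

lemma increasing_above_LD:
  assumes "inj u" "\<forall>x>N. u x = x" "LD u < x" "x < y"
  shows "u x < u y"
proof -
  have ascent: "u z < u (z + 1)" if "LD u < z" for z
  proof -
    have "z \<notin> Des u" using le_LD[OF assms(2), of z] that by linarith
    moreover have "0 < z" using LD_nonneg[OF assms(2)] that by simp
    moreover have "u z \<noteq> u (z + 1)" using assms(1) by (simp add: inj_eq)
    ultimately show ?thesis by (simp add: Des_def)
  qed
  show ?thesis
    using assms(4)
  proof (induction y rule: int_gr_induct)
    case base
    show ?case using ascent assms(3) .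
  next
    case (step y)
    then show ?case using ascent[of y] assms(3) by simp
  qed
qed

lemma signed_perm_abs_le:
  assumes "signed_perm w" "\<forall>x>N. w x = x" "\<bar>x\<bar> \<le> N"
  shows "\<bar>w x\<bar> \<le> N"
proof (rule abs_le_if_fixed_outside[OF signed_perm_inj[OF assms(1)] _ assms(3)])
  fix y assume "N < \<bar>y\<bar>"
  then have "w y = y \<or> w (- y) = - y" using assms(2) by (cases "0 \<le> y") auto
  then show "w y = y" using signed_perm_odd[OF assms(1), of y] by auto
qed

lemma LD_dichotomy:
  assumes v: "v \<in> W_n X n" and "0 < LD v" and u: "u \<in> W_inf X"
    and descends: "u (LD v) < v (LD v)"
    and ascending: "\<And>x. LD v < x \<Longrightarrow> u x < u (x + 1)"
    and fixed: "\<forall>x>int n + 1. u x = x"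
    and fixed_or_ascent: "(\<forall>x>int n. u x = x) \<or> u (LD v) < u (LD v + 1)"
  shows "(u \<in> W_n X n \<and> prec_LD u v) \<or> (u \<in> W_n X (n + 1) \<and> LD u < LD v)"
proof -
  have "LD u \<le> LD v"
    using fixed \<open>0 < LD v\<close> ascending by (intro LD_le) auto
  from fixed_or_ascent show ?thesis
  proof
    assume "\<forall>x>int n. u x = x"
    then have "u \<in> W_n X n" using u by (simp add: W_n_def)
    moreover have "prec_LD u v"
      using \<open>LD u \<le> LD v\<close> \<open>0 < LD v\<close> descends by (cases "LD u = LD v") (auto simp: prec_LD_def)
    ultimately show ?thesis by blast
  next
    assume ascent: "u (LD v) < u (LD v + 1)"
    have "u \<in> W_n X (n + 1)" using u fixed by (simp add: W_n_def)
    moreover have "LD u \<noteq> LD v"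
    proof
      assume "LD u = LD v"
      then have "LD v \<in> Des u" using LD_in_Des[OF fixed] \<open>0 < LD v\<close> by simp
      with ascent show False by (simp add: Des_def)
    qed
    ultimately show ?thesis using \<open>LD u \<le> LD v\<close> by simp
  qed
qed

section \<open>Length-additive chains of reflections\<close>

locale length_additive_tref_chain =
  fixes X :: ctype and n l :: nat and v :: "int \<Rightarrow> int" and j :: "nat \<Rightarrow> int" and k :: int
  assumes v_in_W_n: "v \<in> W_n X n"
    and k_eq_LD: "k = LD v" and k_pos: "0 < k" and l_pos: "1 \<le> l"
    and j_less_k: "\<And>a. 1 \<le> a \<Longrightarrow> a \<le> l \<Longrightarrow> j a < k"
    and j_increasing: "\<And>a b. 1 \<le> a \<Longrightarrow> a < b \<Longrightarrow> b \<le> l \<Longrightarrow> j a < j b \<or> (a = 1 \<and> j a = 0)"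
      \<comment> \<open>the alternative \<open>j 1 = 0\<close> of the theorem, here for every type\<close>
    and tref_in_W_inf: "\<And>a. 1 \<le> a \<Longrightarrow> a \<le> l \<Longrightarrow> tref (j a) k \<in> W_inf X"
    and len_tprod: "\<And>a. 1 \<le> a \<Longrightarrow> a \<le> l \<Longrightarrow> len X (tprod v j k a) = len X v + int a"
begin

abbreviation u :: "nat \<Rightarrow> int \<Rightarrow> int" where
  "u \<equiv> tprod v j k"

lemma signed_perm_v: "signed_perm v"
  using v_in_W_n by (simp add: W_n_def W_inf_def)

lemma v_fixed: "\<forall>x>int n. v x = x"
  using v_in_W_n by (simp add: W_n_def)

lemma k_le_n: "k \<le> int n"
  using Des_subset[OF v_fixed] LD_in_Des[OF v_fixed] k_eq_LD k_pos by auto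

lemma v_increasing: "k < x \<Longrightarrow> x < y \<Longrightarrow> v x < v y"
  using increasing_above_LD[OF signed_perm_inj[OF signed_perm_v] v_fixed] k_eq_LD by simp

lemma j_nonzero_if_TD: "X = TD \<Longrightarrow> 1 \<le> a \<Longrightarrow> a \<le> l \<Longrightarrow> j a \<noteq> 0"
  using tref_in_W_inf ell0_tref_0[OF k_pos] by (fastforce simp: W_inf_def)

lemma signed_perm_u: "a \<le> l \<Longrightarrow> signed_perm (u a)"
proof (induction a)
  case 0
  then show ?case using signed_perm_v by simp
next
  case (Suc a)
  then have "signed_perm (tref (j (Suc a)) k)"
    using tref_in_W_inf[of "Suc a"] by (simp add: W_inf_def)
  moreover have "signed_perm (u a)" using Suc by simp
  ultimately show ?case
    unfolding tprod.simps by (intro signed_perm_comp)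
qed

lemma len_u_Suc: "Suc a \<le> l \<Longrightarrow> len X (u (Suc a)) = len X (u a) + 1"
  using len_tprod[of "Suc a"] len_tprod[of a] by (cases "a = 0") auto

lemma chain_step:
  assumes "Suc a \<le> l"
  shows "j (Suc a) \<noteq> -k" and "u (Suc a) k < u a k"
proof -
  have "len X (u a \<circ> tref (j (Suc a)) k) = len X (u a) + 1"
    using len_u_Suc[OF assms] by simp
  note len_comp_tref_eq_Suc[OF signed_perm_u k_pos j_less_k j_nonzero_if_TD this]
  then show "j (Suc a) \<noteq> -k" and "u (Suc a) k < u a k"
    using assms by simp_all
qed

lemma u_k_strict_antimono:
  assumes "a < b" "b \<le> l"
  shows "u b k < u a k"
proof -
  have "Suc a \<le> b" using assms(1) by simp
  then show ?thesis
    using assms(2)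
  proof (induction b rule: dec_induct)
    case base
    then show ?case using chain_step(2) by simp
  next
    case (step b)
    then show ?case
      using chain_step(2)[of b] by simp
  qed
qed

lemma u_k_antimono: "a \<le> b \<Longrightarrow> b \<le> l \<Longrightarrow> u b k \<le> u a k"
  using u_k_strict_antimono[of a b] by (cases "a = b") auto

lemma even_ell0_u: "X = TD \<Longrightarrow> a \<le> l \<Longrightarrow> even (ell0 (u a))"
proof (induction a)
  case 0
  then show ?case using v_in_W_n by (simp add: W_n_def W_inf_def)
next
  case (Suc a)
  have "j (Suc a) \<noteq> 0" "j (Suc a) \<noteq> -k" "j (Suc a) < k"
    using j_nonzero_if_TD[OF Suc.prems(1)] chain_step(1) j_less_k Suc.prems(2) by auto
  then have "signed_transp (tref (j (Suc a)) k) (j (Suc a)) k"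
    using signed_transp_tref[of k "j (Suc a)"] k_pos by simp
  then have "even (ell0 (u a \<circ> tref (j (Suc a)) k)) \<longleftrightarrow> even (ell0 (u a))"
    using \<open>j (Suc a) \<noteq> 0\<close> \<open>j (Suc a) \<noteq> -k\<close> \<open>j (Suc a) < k\<close> k_pos Suc.prems(2)
    by (intro even_ell0_comp_transp signed_perm_u) auto
  moreover have "even (ell0 (u a))" using Suc by simp
  ultimately show ?case
    unfolding tprod.simps(2) by blast
qed

lemma u_l_in_W_inf: "u l \<in> W_inf X"
  using signed_perm_u even_ell0_u by (simp add: W_inf_def)

lemma u_eq_above_k:
  assumes "a \<le> b" "b \<le> l" "k < x" "\<And>c. a < c \<Longrightarrow> c \<le> b \<Longrightarrow> x \<noteq> - j c"
  shows "u b x = u a x"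
proof (rule tprod_untouched[OF assms(1)])
  fix c assume "a < c" "c \<le> b"
  then show "x \<notin> {j c, - j c, k, -k}"
    using assms(2-4) j_less_k[of c] k_pos by fastforce
qed

lemma u_eq_v_above_k:
  assumes "a \<le> l" "k < x" "\<And>c. 0 < c \<Longrightarrow> c \<le> a \<Longrightarrow> x \<noteq> - j c"
  shows "u a x = v x"
  using u_eq_above_k[of 0 a x] assms by simp

lemma u_k_at_big_index:
  assumes "Suc a \<le> l" "j (Suc a) < -k"
  shows "u (Suc a) k = - v (- j (Suc a))"
proof -
  have "signed_transp (tref (j (Suc a)) k) (j (Suc a)) k"
    using signed_transp_tref[of k "j (Suc a)"] assms(2) k_pos by auto
  then have "tref (j (Suc a)) k k = j (Suc a)"
    using signed_transp_values by blast
  moreover have "u a (- j (Suc a)) = v (- j (Suc a))"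
  proof (rule u_eq_v_above_k)
    show "- j (Suc a) \<noteq> - j c" if "0 < c" "c \<le> a" for c
      using j_increasing[of c "Suc a"] that assms k_pos by auto
  qed (use assms in auto)
  ultimately show ?thesis
    using signed_perm_odd[OF signed_perm_u, of a "j (Suc a)"] assms(1) by simp
qed

lemma at_most_one_big_index:
  assumes "1 \<le> a" "a < b" "b \<le> l" "j a < -k"
  shows "-k \<le> j b"
proof (rule ccontr)
  assume "\<not> -k \<le> j b"
  obtain a' b' where ab: "a = Suc a'" "b = Suc b'"
    using assms(1,2) by (cases a; cases b) auto
  have "u b k < u a k"
    using u_k_strict_antimono assms(2,3) .
  then have "v (- j a) < v (- j b)"
    using u_k_at_big_index[of a'] u_k_at_big_index[of b'] ab assms \<open>\<not> -k \<le> j b\<close> by simp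
  moreover have "j a < j b"
    using j_increasing[OF assms(1-3)] assms(4) k_pos by auto
  then have "v (- j b) < v (- j a)"
    using \<open>\<not> -k \<le> j b\<close> by (intro v_increasing) auto
  ultimately show False by simp
qed

context
  fixes b :: nat
  assumes big_index: "Suc b \<le> l" "j (Suc b) < -k"
begin

lemma other_indices_small:
  assumes "1 \<le> c" "c \<le> l" "c \<noteq> Suc b"
  shows "-k \<le> j c"
proof (cases "c < Suc b")
  case True
  show ?thesis
  proof (rule ccontr)
    assume "\<not> -k \<le> j c"
    then show False
      using at_most_one_big_index[OF assms(1) True big_index(1)] big_index(2) by simp
  qed
next
  case False
  then show ?thesis
    using at_most_one_big_index[of "Suc b" c] assms big_index by simp
qed

lemma u_b_eq_v_big: "k < x \<Longrightarrow> u b x = v x"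
proof (rule u_eq_v_above_k)
  show "x \<noteq> - j c" if "k < x" "0 < c" "c \<le> b" for c
    using other_indices_small[of c] that big_index(1) by fastforce
qed (use big_index(1) in auto)

lemma u_l_eq_v_big: "k < x \<Longrightarrow> x \<noteq> - j (Suc b) \<Longrightarrow> u l x = v x"
proof (rule u_eq_v_above_k)
  show "x \<noteq> - j c" if "k < x" "x \<noteq> - j (Suc b)" "0 < c" "c \<le> l" for c
    using other_indices_small[of c] that by fastforce
qed auto

lemma transp_big: "signed_transp (tref (j (Suc b)) k) (j (Suc b)) k"
  using signed_transp_tref[of k "j (Suc b)"] big_index(2) k_pos by auto

lemma u_l_at_big: "u l (- j (Suc b)) = - u b k"
proof -
  have "u l (- j (Suc b)) = u (Suc b) (- j (Suc b))"
  proof (rule u_eq_above_k)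
    show "- j (Suc b) \<noteq> - j c" if "Suc b < c" "c \<le> l" for c
      using other_indices_small[of c] that big_index(2) by auto
  qed (use big_index k_pos in auto)
  also have "\<dots> = u b (-k)"
    using signed_transp_values[OF transp_big] by simp
  also have "\<dots> = - u b k"
    using signed_perm_odd[OF signed_perm_u] big_index(1) by simp
  finally show ?thesis .
qed

lemma u_b_fixed_big: "\<forall>x>int n. u b x = x"
  using u_b_eq_v_big v_fixed k_le_n by auto

lemma big_value_below: "- u b k < v (- j (Suc b))"
  using chain_step(2)[OF big_index(1)] u_k_at_big_index[OF big_index] by simp

lemma big_value_above:
  assumes "k < - j (Suc b) - 1"
  shows "v (- j (Suc b) - 1) < - u b k"
  \<comment> \<open>otherwise the position \<open>1 - i\<close> would let \<open>t_{j k}\<close> raise the length of \<open>u b\<close> by two\<close>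
proof (rule ccontr)
  define i where "i = - j (Suc b)"
  define w where "w = u b"
  define t where "t = tref (j (Suc b)) k"
  assume "\<not> v (- j (Suc b) - 1) < - u b k"
  then have "- w k \<le> v (i - 1)" unfolding i_def w_def by simp
  have odd: "w (- x) = - w x" for x
    unfolding w_def using signed_perm_odd[OF signed_perm_u] big_index(1) by simp
  have w_above: "w x = v x" if "k < x" for x
    unfolding w_def using u_b_eq_v_big[OF that] .
  have "w (j (Suc b)) < w k"
    using chain_step(2)[OF big_index(1)] signed_transp_values[OF transp_big] unfolding w_def by simp
  then interpret signed_transp_ascent w t "j (Suc b)" k
    using signed_perm_u[of b] transp_big big_index k_pos
    unfolding w_def t_def by unfold_locales auto
  have "w (1 - i) \<noteq> w k"
    using signed_perm_inj[OF signed_perm_u, of b] big_index(1) assms k_pos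
    unfolding w_def i_def by (auto simp: inj_eq)
  moreover have "w (1 - i) = - v (i - 1)"
    using odd[of "i - 1"] w_above[of "i - 1"] assms unfolding i_def by simp
  ultimately have "w (1 - i) < w k"
    using \<open>- w k \<le> v (i - 1)\<close> by simp
  moreover have "w (- i) < w (1 - i)"
    using odd[of i] odd[of "i - 1"] w_above[of i] w_above[of "i - 1"]
      v_increasing[of "i - 1" i] assms
    unfolding i_def by simp
  ultimately have "len X w + 2 \<le> len X (w \<circ> t)"
    using assms k_pos big_index(2) unfolding i_def
    by (intro len_comp_ge_Suc_Suc[of X "1 - i"]) (auto simp: i_def)
  moreover have "len X (w \<circ> t) = len X w + 1"
    using len_u_Suc[OF big_index(1)] unfolding w_def t_def by simp
  ultimately show False by simp
qed

lemma big_le_Suc_n: "- j (Suc b) \<le> int n + 1"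
proof (rule ccontr)
  assume "\<not> - j (Suc b) \<le> int n + 1"
  then have "k < - j (Suc b) - 1" "v (- j (Suc b) - 1) = - j (Suc b) - 1"
    using k_le_n v_fixed by auto
  moreover have "\<bar>u b k\<bar> \<le> int n"
    using signed_perm_abs_le[OF signed_perm_u u_b_fixed_big] big_index(1) k_le_n k_pos by simp
  ultimately show False
    using big_value_above \<open>\<not> - j (Suc b) \<le> int n + 1\<close> by simp
qed

lemma u_l_ascending_big:
  assumes "k < x"
  shows "u l x < u l (x + 1)"
proof -
  define i where "i = - j (Suc b)"
  have "k < i" using big_index(2) unfolding i_def by simp
  consider "x + 1 = i" | "x = i" | "x \<noteq> i" "x + 1 \<noteq> i" by blast
  then show ?thesis
  proof cases
    case 1
    then have "x = i - 1" by simp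
    then have "u l x = v (i - 1)"
      using u_l_eq_v_big[OF assms] unfolding i_def by simp
    moreover have "u l (x + 1) = - u b k"
      using 1 u_l_at_big unfolding i_def by simp
    moreover have "v (i - 1) < - u b k"
      using big_value_above 1 assms unfolding i_def by simp
    ultimately show ?thesis by simp
  next
    case 2
    then show ?thesis
      using big_value_below u_l_at_big u_l_eq_v_big[of "x + 1"] v_increasing[of i "i + 1"] \<open>k < i\<close>
      unfolding i_def by force
  next
    case 3
    then show ?thesis
      using u_l_eq_v_big[of x] u_l_eq_v_big[of "x + 1"] v_increasing[of x "x + 1"] assms
      unfolding i_def by simp
  qed
qed

lemma u_l_fixed_big: "\<forall>x>int n + 1. u l x = x"
  using u_l_eq_v_big big_le_Suc_n v_fixed k_le_n by auto

lemma u_l_fixed_or_ascent_big: "(\<forall>x>int n. u l x = x) \<or> u l k < u l (k + 1)"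
proof (cases "- j (Suc b) \<le> int n")
  case True
  then show ?thesis using u_l_eq_v_big v_fixed k_le_n by auto
next
  case False
  then have i: "- j (Suc b) = int n + 1" using big_le_Suc_n by simp
  have "u l k \<le> u (Suc b) k"
    by (rule u_k_antimono) (use big_index(1) in auto)
  also have "\<dots> = - (int n + 1)"
    using u_k_at_big_index[OF big_index] i v_fixed by simp
  finally have "u l k \<le> - (int n + 1)" .
  moreover have "- int n \<le> u l (k + 1)"
  proof (cases "k + 1 = - j (Suc b)")
    case True
    then show ?thesis
      using u_l_at_big signed_perm_abs_le[OF signed_perm_u u_b_fixed_big, of k]
        big_index(1) k_le_n k_pos
      by simp
  next
    case False
    then have "\<bar>v (k + 1)\<bar> \<le> int n"
      using signed_perm_abs_le[OF signed_perm_v v_fixed] i k_le_n k_pos by simp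
    then show ?thesis using u_l_eq_v_big[of "k + 1"] False by simp
  qed
  ultimately show ?thesis by simp
qed

end

lemma u_l_eq_v_no_big_index:
  assumes "\<And>c. 0 < c \<Longrightarrow> c \<le> l \<Longrightarrow> -k \<le> j c" "k < x"
  shows "u l x = v x"
proof (rule u_eq_v_above_k)
  show "x \<noteq> - j c" if "0 < c" "c \<le> l" for c
    using assms(1)[OF that] assms(2) by linarith
qed (use assms(2) in auto)

lemma chain_end_dichotomy:
  "(u l \<in> W_n X n \<and> prec_LD (u l) v) \<or> (u l \<in> W_n X (n + 1) \<and> LD (u l) < LD v)"
proof -
  have v_k: "u l k < v k"
    using u_k_strict_antimono[of 0 l] l_pos by simp
  show ?thesis
  proof (cases "\<exists>b. Suc b \<le> l \<and> j (Suc b) < -k")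
    case True
    then obtain b where b: "Suc b \<le> l" "j (Suc b) < -k" by blast
    show ?thesis
    proof (rule LD_dichotomy[OF v_in_W_n _ u_l_in_W_inf])
      show "u l x < u l (x + 1)" if "LD v < x" for x
        using u_l_ascending_big[OF b] that k_eq_LD by simp
      show "\<forall>x>int n + 1. u l x = x"
        using u_l_fixed_big[OF b] .
      show "(\<forall>x>int n. u l x = x) \<or> u l (LD v) < u l (LD v + 1)"
        using u_l_fixed_or_ascent_big[OF b] k_eq_LD by simp
    qed (use k_pos v_k k_eq_LD in auto)
  next
    case False
    have "-k \<le> j c" if "0 < c" "c \<le> l" for c
      using False that by (cases c) auto
    note u_l_eq_v = u_l_eq_v_no_big_index[OF this]
    show ?thesis
    proof (rule LD_dichotomy[OF v_in_W_n _ u_l_in_W_inf])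
      show "u l x < u l (x + 1)" if "LD v < x" for x
        using that u_l_eq_v v_increasing k_eq_LD by simp
      show "\<forall>x>int n + 1. u l x = x" and "(\<forall>x>int n. u l x = x) \<or> u l (LD v) < u l (LD v + 1)"
        using u_l_eq_v v_fixed k_le_n by auto
    qed (use k_pos v_k k_eq_LD in auto)
  qed
qed

end

theorem lemma4p14:
  fixes X :: ctype and n l :: nat and v :: "int \<Rightarrow> int" and j :: "nat \<Rightarrow> int"
  assumes "n > 0"
    and "v \<in> W_n X n"
    and "LD v > 0"
    and "l \<ge> 1"
    and "(\<forall>a b. 1 \<le> a \<longrightarrow> a < b \<longrightarrow> b \<le> l \<longrightarrow> j a < j b) \<and> (\<forall>a. 1 \<le> a \<longrightarrow> a \<le> l \<longrightarrow> j a < LD v)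
         \<or> (X = TB \<and> j 1 = 0 \<and> (\<forall>a b. 2 \<le> a \<longrightarrow> a < b \<longrightarrow> b \<le> l \<longrightarrow> j a < j b)
            \<and> (\<forall>a. 2 \<le> a \<longrightarrow> a \<le> l \<longrightarrow> j a < LD v))"
    and "\<forall>a. 1 \<le> a \<longrightarrow> a \<le> l \<longrightarrow> tref (j a) (LD v) \<in> W_inf X"
    and "\<forall>a. 1 \<le> a \<longrightarrow> a \<le> l \<longrightarrow> len X (tprod v j (LD v) a) = len X v + int a"
  shows "(tprod v j (LD v) l \<in> W_n X n \<and> prec_LD (tprod v j (LD v) l) v)
       \<or> (tprod v j (LD v) l \<in> W_n X (n + 1) \<and> LD (tprod v j (LD v) l) < LD v)"
proof -
  interpret length_additive_tref_chain X n l v j "LD v"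
  proof
    show "j a < LD v" if "1 \<le> a" "a \<le> l" for a
      using assms(3,5) that by (cases "a = 1") auto
    show "j a < j b \<or> (a = 1 \<and> j a = 0)" if "1 \<le> a" "a < b" "b \<le> l" for a b
      using assms(5) that by (cases "a = 1") auto
  qed (use assms(2-4,6,7) in auto)
  show ?thesis by (rule chain_end_dichotomy)
qed

end
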